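(* Let $f,g\in\mathbb{R}[x,y]$ with $f(0,0)=g(0,0)=0$, both regular in $x$, such that $\{f=0\}\subset\{g=0\}$ near the origin, and let $\mathscr{L}_g(f)$ be the Łojasiewicz exponent of $f$ with respect to $g$. (1) If $0<\mathscr{L}_g(f)<1$, then $\displaystyle\lim_{(x,y)\to(0,0)}\frac{g(x,y)}{f(x,y)}=0$. (2) If $\mathscr{L}_g(f)>1$, then the limit $\displaystyle\lim_{(x,y)\to(0,0)}\frac{g(x,y)}{f(x,y)}$ does not exist.
   Context: A polynomial $f=f_m+f_{m+1}+\cdots$ ($f_k$ homogeneous of degree $k$, $f_m\not\equiv0$, $m\ge1$) is regular in $x$ if $f_m(1,0)\neq0$. The Łojasiewicz exponent $\mathscr{L}_g(f)$ is the infimum of all $\alpha>0$ for which there exist $C,r>0$ with $|f(x,y)|\ge C|g(x,y)|^\alpha$ for $|(x,y)|\le r$. The limit is taken over points where $f\neq0$. *)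

theory Defs
  imports "HOL-Analysis.Analysis" "HOL-Library.Extended_Real"
begin

text \<open>A real bivariate polynomial is represented by its coefficient function
  c :: nat \<times> nat \<Rightarrow> real with finite support; c (i,j) is the coefficient of x^i y^j.\<close>

definition bipoly :: "(nat \<times> nat \<Rightarrow> real) \<Rightarrow> bool" where
  "bipoly c \<longleftrightarrow> finite {ij. c ij \<noteq> 0}"

definition beval :: "(nat \<times> nat \<Rightarrow> real) \<Rightarrow> real \<times> real \<Rightarrow> real" where
  "beval c p = (\<Sum>(i,j)\<in>{ij. c ij \<noteq> 0}. c (i,j) * fst p ^ i * snd p ^ j)"

definition hom_part :: "(nat \<times> nat \<Rightarrow> real) \<Rightarrow> nat \<Rightarrow> real \<times> real \<Rightarrow> real" where
  "hom_part c k p = (\<Sum>(i,j)\<in>{ij. c ij \<noteq> 0 \<and> fst ij + snd ij = k}. c (i,j) * fst p ^ i * snd p ^ j)"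

definition bord :: "(nat \<times> nat \<Rightarrow> real) \<Rightarrow> nat" where
  "bord c = (LEAST k. \<exists>i j. i + j = k \<and> c (i,j) \<noteq> 0)"

definition regular_x :: "(nat \<times> nat \<Rightarrow> real) \<Rightarrow> bool" where
  "regular_x c \<longleftrightarrow> (\<exists>ij. c ij \<noteq> 0) \<and> bord c \<ge> 1 \<and> hom_part c (bord c) (1,0) \<noteq> 0"

text \<open>Lojasiewicz exponent of f with respect to g (infimum in the extended reals;
  the infimum of the empty set is +\<infinity>).\<close>
definition loj_exp :: "(real \<times> real \<Rightarrow> real) \<Rightarrow> (real \<times> real \<Rightarrow> real) \<Rightarrow> ereal" where
  "loj_exp g f = Inf {ereal \<alpha> | \<alpha>. \<alpha> > 0 \<and> (\<exists>C r. C > 0 \<and> r > 0 \<and>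
      (\<forall>p. norm p \<le> r \<longrightarrow> \<bar>f p\<bar> \<ge> C * \<bar>g p\<bar> powr \<alpha>))}"

end

theory Submission
  imports Defs
begin

text \<open>A bound \<open>C \<bar>g\<bar> powr \<alpha> \<le> \<bar>f\<bar>\<close> with \<open>\<alpha> < 1\<close> gives \<open>\<bar>g / f\<bar> \<le> \<bar>g\<bar> powr (1 - \<alpha>) / C\<close>,
  which tends to 0 because \<open>g\<close> is continuous and vanishes at the origin. Conversely, if \<open>g / f\<close>
  has a limit, it is bounded near the origin off \<open>{f = 0}\<close>; together with \<open>{f = 0} \<subseteq> {g = 0}\<close>
  this gives \<open>C \<bar>g\<bar> \<le> \<bar>f\<bar>\<close> near the origin, so the exponent is at most 1.\<close>

definition loj_bound :: "('a::real_normed_vector \<Rightarrow> real) \<Rightarrow> ('a \<Rightarrow> real) \<Rightarrow> real \<Rightarrow> bool" where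
  "loj_bound g f \<alpha> \<longleftrightarrow> (\<exists>C>0. \<forall>\<^sub>F p in nhds 0. C * \<bar>g p\<bar> powr \<alpha> \<le> \<bar>f p\<bar>)"

lemma loj_exp_eq_Inf_loj_bound:
  "loj_exp g f = Inf {ereal \<alpha> | \<alpha>. 0 < \<alpha> \<and> loj_bound g f \<alpha>}"
proof -
  have "(\<exists>C r. C > 0 \<and> r > 0 \<and> (\<forall>p. norm p \<le> r \<longrightarrow> C * \<bar>g p\<bar> powr \<alpha> \<le> \<bar>f p\<bar>))
      \<longleftrightarrow> loj_bound g f \<alpha>" for \<alpha>
    unfolding loj_bound_def eventually_nhds_metric_le dist_norm by (simp add: conj_commute)
  then show ?thesis
    unfolding loj_exp_def by simp
qed

lemma loj_bound_if_loj_exp_less: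
  assumes "loj_exp g f < ereal \<beta>"
  obtains \<alpha> where "0 < \<alpha>" "\<alpha> < \<beta>" "loj_bound g f \<alpha>"
  using assms unfolding loj_exp_eq_Inf_loj_bound Inf_less_iff by auto

lemma loj_exp_le_if_loj_bound:
  assumes "0 < \<alpha>" "loj_bound g f \<alpha>"
  shows "loj_exp g f \<le> ereal \<alpha>"
  unfolding loj_exp_eq_Inf_loj_bound by (rule Inf_lower) (use assms in blast)

lemma abs_divide_le_powr:
  fixes a b C \<alpha> :: real
  assumes "C > 0" "C * \<bar>b\<bar> powr \<alpha> \<le> \<bar>a\<bar>"
  shows "\<bar>b / a\<bar> \<le> \<bar>b\<bar> powr (1 - \<alpha>) / C"
proof (cases "b = 0")
  case False
  then have "a \<noteq> 0"
    using assms by (auto simp: mult_le_0_iff)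
  with False have "\<bar>b / a\<bar> \<le> \<bar>b\<bar> / (C * \<bar>b\<bar> powr \<alpha>)"
    using assms by (auto intro!: divide_left_mono)
  also have "\<dots> = \<bar>b\<bar> powr (1 - \<alpha>) / C"
    using False by (simp add: powr_diff)
  finally show ?thesis .
qed simp

lemma tendsto_divide_zero_if_loj_bound:
  fixes f g :: "'a::real_normed_vector \<Rightarrow> real"
  assumes "loj_bound g f \<alpha>" "\<alpha> < 1" and g: "(g \<longlongrightarrow> 0) (at 0 within S)"
  shows "((\<lambda>p. g p / f p) \<longlongrightarrow> 0) (at 0 within S)"
proof -
  obtain C where "C > 0" and bound: "\<forall>\<^sub>F p in nhds 0. C * \<bar>g p\<bar> powr \<alpha> \<le> \<bar>f p\<bar>"
    using assms(1) unfolding loj_bound_def by blast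
  have "\<forall>\<^sub>F p in at 0 within S. norm (g p / f p) \<le> \<bar>g p\<bar> powr (1 - \<alpha>) / C"
    using filter_leD[OF at_within_le_nhds bound]
    by eventually_elim (use \<open>C > 0\<close> abs_divide_le_powr in auto)
  moreover have "((\<lambda>p. \<bar>g p\<bar> powr (1 - \<alpha>)) \<longlongrightarrow> 0) (at 0 within S)"
    using \<open>\<alpha> < 1\<close> by (auto intro: tendsto_zero_powrI[OF tendsto_rabs_zero[OF g] tendsto_const])
  then have "((\<lambda>p. \<bar>g p\<bar> powr (1 - \<alpha>) / C) \<longlongrightarrow> 0) (at 0 within S)"
    by (rule tendsto_divide_zero)
  ultimately show ?thesis
    by (rule Lim_null_comparison)
qed

lemma loj_bound_one_if_tendsto_divide:
  fixes f g :: "'a::real_normed_vector \<Rightarrow> real"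
  assumes "((\<lambda>p. g p / f p) \<longlongrightarrow> l) (at 0 within {p. f p \<noteq> 0})"
    and "f 0 = 0" and zeros: "\<forall>\<^sub>F p in nhds 0. f p = 0 \<longrightarrow> g p = 0"
  shows "loj_bound g f 1"
proof -
  define M where "M = \<bar>l\<bar> + 1"
  have "M > 0"
    by (simp add: M_def add_nonneg_pos)
  have "\<forall>\<^sub>F p in at 0 within {p. f p \<noteq> 0}. \<bar>g p / f p\<bar> < M"
    using order_tendstoD(2)[OF tendsto_rabs[OF assms(1)]] by (simp add: M_def)
  then have "\<forall>\<^sub>F p in at 0. f p \<noteq> 0 \<longrightarrow> \<bar>g p\<bar> \<le> M * \<bar>f p\<bar>"
    unfolding eventually_at_filter by eventually_elim (auto simp: divide_less_eq)
  with zeros have "\<forall>\<^sub>F p in nhds 0. \<bar>g p\<bar> \<le> M * \<bar>f p\<bar>"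
    unfolding eventually_at_filter by eventually_elim (use \<open>f 0 = 0\<close> \<open>M > 0\<close> in auto)
  then have "\<forall>\<^sub>F p in nhds 0. 1 / M * \<bar>g p\<bar> powr 1 \<le> \<bar>f p\<bar>"
    by eventually_elim (use \<open>M > 0\<close> in \<open>simp add: mult.commute pos_divide_le_eq\<close>)
  with \<open>M > 0\<close> show ?thesis
    unfolding loj_bound_def by (intro exI[of _ "1 / M"]) simp
qed

lemma isCont_beval: "isCont (beval c) p"
  unfolding beval_def case_prod_unfold by (intro continuous_intros)

theorem proposition5p1:
  fixes cf cg :: "nat \<times> nat \<Rightarrow> real"
  defines "f \<equiv> beval cf" and "g \<equiv> beval cg"
  assumes "bipoly cf" and "bipoly cg"
    and "f (0,0) = 0" and "g (0,0) = 0"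
    and "regular_x cf" and "regular_x cg"
    and "\<exists>r>0. \<forall>p. norm p < r \<longrightarrow> f p = 0 \<longrightarrow> g p = 0"
  shows "(0 < loj_exp g f \<and> loj_exp g f < 1 \<longrightarrow>
            ((\<lambda>p. g p / f p) \<longlongrightarrow> 0) (at (0,0) within {p. f p \<noteq> 0}))
       \<and> (loj_exp g f > 1 \<longrightarrow>
            \<not> (\<exists>l::real. ((\<lambda>p. g p / f p) \<longlongrightarrow> l) (at (0,0) within {p. f p \<noteq> 0})))"
proof (intro conjI impI notI)
  assume "0 < loj_exp g f \<and> loj_exp g f < 1"
  then obtain \<alpha> where \<alpha>: "loj_bound g f \<alpha>" "\<alpha> < 1"
    using loj_bound_if_loj_exp_less[of g f 1] by (auto simp: one_ereal_def)
  have "isCont g 0"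
    unfolding g_def by (rule isCont_beval)
  then have "(g \<longlongrightarrow> 0) (at 0 within {p. f p \<noteq> 0})"
    using \<open>g (0,0) = 0\<close> unfolding isCont_def zero_prod_def by (auto intro: tendsto_within_subset)
  with \<alpha> show "((\<lambda>p. g p / f p) \<longlongrightarrow> 0) (at (0,0) within {p. f p \<noteq> 0})"
    unfolding zero_prod_def[symmetric] by (rule tendsto_divide_zero_if_loj_bound)
next
  assume "loj_exp g f > 1"
    and "\<exists>l. ((\<lambda>p. g p / f p) \<longlongrightarrow> l) (at (0,0) within {p. f p \<noteq> 0})"
  then obtain l where "((\<lambda>p. g p / f p) \<longlongrightarrow> l) (at 0 within {p. f p \<noteq> 0})"
    by (auto simp: zero_prod_def)
  moreover have "f 0 = 0"
    using \<open>f (0,0) = 0\<close> by (simp add: zero_prod_def)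
  moreover have "\<forall>\<^sub>F p in nhds 0. f p = 0 \<longrightarrow> g p = 0"
    using assms(9) unfolding eventually_nhds_metric by (auto simp: dist_norm)
  ultimately have "loj_bound g f 1"
    by (rule loj_bound_one_if_tendsto_divide)
  then have "loj_exp g f \<le> 1"
    using loj_exp_le_if_loj_bound[of 1 g f] by (simp add: one_ereal_def)
  with \<open>loj_exp g f > 1\<close> show False
    by simp
qed

end
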